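(* For all $\varepsilon>0$ there exist $c,n_0\in\mathbb{N}$ such that for all primes $p\ge n_0$ the following holds. If $\delta\ge c/\log p$ (with $p^{\delta}$ an integer) and $r$ is a positive integer, then every proper $(r,p^{\delta})$-GAP $X\subseteq\mathbb{Z}_p$ is an $(r/p^{0.9\delta},\,0.1,\,\varepsilon)$-additive source of entropy rate $\delta r$ in $(\mathbb{Z}_p,+)$.
   Context: An $(r,s)$-GAP in $\mathbb{Z}_p$ is a set $\{b_0+\sum_{i=1}^r a_ib_i: a_i\in\mathbb{Z},\ 0\le a_i\le s-1\}$ with $b_0,\dots,b_r\in\mathbb{Z}_p$; proper means all $s^r$ sums are distinct. For $X\subseteq\mathbb{Z}_p$, $\mathrm{Sym}_{1-\alpha}(X)=\{g:|X\cap(X+g)|\ge(1-\alpha)|X|\}$, and $X$ is $(\alpha,\beta,\tau)$-additive if $|X+X|\le|X|^{1+\tau}$ and $|\mathrm{Sym}_{1-\alpha}(X)|\ge|X|^{\beta}$. Entropy rate $\delta'$ means $|X|\ge p^{\delta'}$. *)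

theory Defs
  imports "HOL-Analysis.Analysis"
begin

text \<open>Z_p is modelled by the residues {0..<p} :: int set with addition mod p.\<close>

definition gap_map :: "int \<Rightarrow> int \<Rightarrow> (nat \<Rightarrow> int) \<Rightarrow> nat \<Rightarrow> (nat \<Rightarrow> nat) \<Rightarrow> int" where
  "gap_map p b0 b r a = (b0 + (\<Sum>i=1..r. int (a i) * b i)) mod p"

definition gap_coeffs :: "nat \<Rightarrow> nat \<Rightarrow> (nat \<Rightarrow> nat) set" where
  "gap_coeffs r s = PiE {1..r} (\<lambda>_. {0..<s})"

definition GAP :: "int \<Rightarrow> int \<Rightarrow> (nat \<Rightarrow> int) \<Rightarrow> nat \<Rightarrow> nat \<Rightarrow> int set" where
  "GAP p b0 b r s = gap_map p b0 b r ` gap_coeffs r s"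

definition proper_GAP :: "int \<Rightarrow> int \<Rightarrow> (nat \<Rightarrow> int) \<Rightarrow> nat \<Rightarrow> nat \<Rightarrow> bool" where
  "proper_GAP p b0 b r s = inj_on (gap_map p b0 b r) (gap_coeffs r s)"

definition sumset_mod :: "int \<Rightarrow> int set \<Rightarrow> int set \<Rightarrow> int set" where
  "sumset_mod p X Y = {(x + y) mod p | x y. x \<in> X \<and> y \<in> Y}"

definition shift_mod :: "int \<Rightarrow> int set \<Rightarrow> int \<Rightarrow> int set" where
  "shift_mod p X g = (\<lambda>x. (x + g) mod p) ` X"

definition Sym :: "int \<Rightarrow> real \<Rightarrow> int set \<Rightarrow> int set" where
  "Sym p t X = {g \<in> {0..<p}. real (card (X \<inter> shift_mod p X g)) \<ge> t * real (card X)}"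

definition additive :: "int \<Rightarrow> real \<Rightarrow> real \<Rightarrow> real \<Rightarrow> int set \<Rightarrow> bool" where
  "additive p \<alpha> \<beta> \<tau> X \<longleftrightarrow>
     real (card (sumset_mod p X X)) \<le> real (card X) powr (1 + \<tau>) \<and>
     real (card (Sym p (1 - \<alpha>) X)) \<ge> real (card X) powr \<beta>"

definition entropy_rate :: "int \<Rightarrow> real \<Rightarrow> int set \<Rightarrow> bool" where
  "entropy_rate p d X \<longleftrightarrow> real (card X) \<ge> real_of_int p powr d"

end

theory Submission imports Defs begin

text \<open>Let \<open>X\<close> be a proper \<open>(r,s)\<close>-GAP, so \<open>|X| = s\<^sup>r\<close>. Coefficient vectors with entries
  below \<open>s\<close> add up to entries below \<open>2s - 1\<close>, so \<open>X + X\<close> lies in an \<open>(r, 2s - 1)\<close>-GAP and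
  \<open>|X + X| \<le> (2s)\<^sup>r \<le> |X|\<^sup>1\<^sup>+\<^sup>\<epsilon>\<close> as soon as \<open>s\<^sup>\<epsilon> \<ge> 2\<close>; for \<open>s = p\<^sup>\<delta>\<close> this follows from
  \<open>\<delta> log p \<ge> c \<ge> 1/\<epsilon>\<close> and \<open>e\<^sup>x \<ge> 1 + x\<close>.
  If \<open>g\<close> has coefficient vector \<open>t\<close>, then \<open>X \<inter> (X + g)\<close> contains the image of the box
  \<open>t\<^sub>i \<le> a\<^sub>i < s\<close> of coefficient vectors, and by the Weierstrass product inequality this box has at least
  \<open>s\<^sup>r (1 - \<Sum>t\<^sub>i / s) \<ge> s\<^sup>r (1 - r s\<^sup>0\<^sup>.\<^sup>1 / s)\<close> elements when all \<open>t\<^sub>i \<le> s\<^sup>0\<^sup>.\<^sup>1\<close>. These shifts form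
  a proper GAP of at least \<open>(s\<^sup>0\<^sup>.\<^sup>1)\<^sup>r = |X|\<^sup>0\<^sup>.\<^sup>1\<close> elements inside \<open>Sym\<^sub>1\<^sub>-\<^sub>\<alpha>(X)\<close> for
  \<open>\<alpha> = r / s\<^sup>0\<^sup>.\<^sup>9\<close>.\<close>

lemma finite_gap_coeffs: "finite (gap_coeffs r s)"
  unfolding gap_coeffs_def by (simp add: finite_PiE)

lemma card_gap_coeffs: "card (gap_coeffs r s) = s ^ r"
  unfolding gap_coeffs_def by (simp add: card_PiE)

lemma gap_coeffs_mono: "k \<le> s \<Longrightarrow> gap_coeffs r k \<subseteq> gap_coeffs r s"
  unfolding gap_coeffs_def by (intro PiE_mono) auto

lemma finite_GAP: "finite (GAP p b0 b r s)"
  unfolding GAP_def by (simp add: finite_gap_coeffs)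

lemma card_GAP: "proper_GAP p b0 b r s \<Longrightarrow> card (GAP p b0 b r s) = s ^ r"
  unfolding GAP_def proper_GAP_def by (simp add: card_image card_gap_coeffs)

lemma card_GAP_le: "card (GAP p b0 b r s) \<le> s ^ r"
  unfolding GAP_def by (metis card_gap_coeffs card_image_le finite_gap_coeffs)

lemma gap_map_cong: "(\<And>i. i \<in> {1..r} \<Longrightarrow> a i = a' i) \<Longrightarrow> gap_map p b0 b r a = gap_map p b0 b r a'"
  unfolding gap_map_def by (metis (no_types, lifting) sum.cong)

lemma gap_map_add:
  "gap_map p (b0 + b0') b r (\<lambda>i. a i + a' i) = (gap_map p b0 b r a + gap_map p b0' b r a') mod p"
  unfolding gap_map_def by (simp add: mod_add_eq sum.distrib algebra_simps)

lemma proper_GAP_change_base: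
  assumes "proper_GAP p b0 b r s" "k \<le> s"
  shows "proper_GAP p b0' b r k"
  unfolding proper_GAP_def
proof (rule inj_onI)
  fix a a' assume a: "a \<in> gap_coeffs r k" "a' \<in> gap_coeffs r k"
    and eq: "gap_map p b0' b r a = gap_map p b0' b r a'"
  have "gap_map p b0 b r a = gap_map p b0 b r a'"
    using gap_map_add[of p "b0 - b0'" b0' b r "\<lambda>_. 0" a]
      gap_map_add[of p "b0 - b0'" b0' b r "\<lambda>_. 0" a'] by (simp add: eq)
  then show "a = a'"
    using assms a gap_coeffs_mono unfolding proper_GAP_def inj_on_def by blast
qed

lemma sumset_GAP_subset:
  "sumset_mod p (GAP p b0 b r s) (GAP p b0 b r s) \<subseteq> GAP p (2 * b0) b r (2 * s - 1)"
proof
  fix z assume "z \<in> sumset_mod p (GAP p b0 b r s) (GAP p b0 b r s)"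
  then obtain a a' where a: "a \<in> gap_coeffs r s" "a' \<in> gap_coeffs r s"
    and z: "z = (gap_map p b0 b r a + gap_map p b0 b r a') mod p"
    unfolding sumset_mod_def GAP_def by auto
  define c where "c = restrict (\<lambda>i. a i + a' i) {1..r}"
  have "a i + a' i < 2 * s - 1" if "i \<in> {1..r}" for i
  proof -
    have "a i < s" "a' i < s"
      using a that unfolding gap_coeffs_def by auto
    then show ?thesis by linarith
  qed
  then have c: "c \<in> gap_coeffs r (2 * s - 1)"
    unfolding c_def gap_coeffs_def by (simp add: restrict_PiE_iff)
  have "z = gap_map p (b0 + b0) b r (\<lambda>i. a i + a' i)"
    unfolding z by (rule gap_map_add[symmetric])
  also have "\<dots> = gap_map p (2 * b0) b r c"
    unfolding c_def mult_2 by (intro gap_map_cong) simp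
  finally show "z \<in> GAP p (2 * b0) b r (2 * s - 1)"
    using c unfolding GAP_def by blast
qed

lemma card_sumset_GAP_le:
  "card (sumset_mod p (GAP p b0 b r s) (GAP p b0 b r s)) \<le> (2 * s - 1) ^ r"
  using card_mono[OF finite_GAP sumset_GAP_subset] card_GAP_le by (rule le_trans)

lemma card_sumset_GAP_powr_le:
  assumes "proper_GAP p b0 b r s" "2 \<le> real s powr \<epsilon>"
  shows "real (card (sumset_mod p (GAP p b0 b r s) (GAP p b0 b r s)))
           \<le> real (card (GAP p b0 b r s)) powr (1 + \<epsilon>)"
proof -
  have s: "real s > 0"
    using assms(2) by (cases "s = 0") auto
  have "card (sumset_mod p (GAP p b0 b r s) (GAP p b0 b r s)) \<le> (2 * s) ^ r"
    using card_sumset_GAP_le[of p b0 b r s] power_mono[of "2 * s - 1" "2 * s" r] by linarith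
  then have "real (card (sumset_mod p (GAP p b0 b r s) (GAP p b0 b r s))) \<le> (2 * real s) ^ r"
    by (metis of_nat_le_iff of_nat_mult of_nat_numeral of_nat_power)
  also have "\<dots> \<le> (real s powr \<epsilon> * real s) ^ r"
    using assms(2) s by (intro power_mono mult_right_mono) auto
  also have "\<dots> = (real s powr (1 + \<epsilon>)) ^ r"
    using s by (simp add: powr_add mult.commute)
  also have "\<dots> = (real s ^ r) powr (1 + \<epsilon>)"
    using s by (simp add: powr_power powr_realpow[symmetric] powr_powr mult.commute)
  finally show ?thesis
    using card_GAP[OF assms(1)] by simp
qed

lemma Weierstrass_prod_ineq_scaled:
  fixes y :: "'a \<Rightarrow> real"
  assumes "s > 0" "\<And>i. i \<in> I \<Longrightarrow> 0 \<le> y i \<and> y i \<le> s"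
  shows "s ^ card I * (1 - sum y I / s) \<le> (\<Prod>i\<in>I. s - y i)"
proof (cases "finite I")
  case True
  have "1 - sum y I / s \<le> (\<Prod>i\<in>I. 1 - y i / s)"
    using Weierstrass_prod_ineq[of I "\<lambda>i. y i / s"] assms by (simp add: sum_divide_distrib)
  also have "s ^ card I * (\<Prod>i\<in>I. 1 - y i / s) = (\<Prod>i\<in>I. s * (1 - y i / s))"
    by (simp add: prod.distrib)
  also have "\<dots> = (\<Prod>i\<in>I. s - y i)"
    using \<open>s > 0\<close> by (simp add: algebra_simps)
  finally show ?thesis
    using \<open>s > 0\<close> by (simp add: mult_left_mono)
qed simp

lemma card_inter_shift_GAP_ge:
  assumes proper: "proper_GAP p b0 b r s" and t: "t \<in> gap_coeffs r s"
  shows "(\<Prod>i=1..r. s - t i) \<le> card (GAP p b0 b r s \<inter> shift_mod p (GAP p b0 b r s) (gap_map p 0 b r t))"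
proof -
  let ?X = "GAP p b0 b r s"
  define A where "A = PiE {1..r} (\<lambda>i. {t i..<s})"
  have A: "A \<subseteq> gap_coeffs r s"
    unfolding A_def gap_coeffs_def by (intro PiE_mono) auto
  have "gap_map p b0 b r ` A \<subseteq> ?X \<inter> shift_mod p ?X (gap_map p 0 b r t)"
  proof
    fix z assume "z \<in> gap_map p b0 b r ` A"
    then obtain a where a: "a \<in> A" and z: "z = gap_map p b0 b r a" by blast
    define a' where "a' = restrict (\<lambda>i. a i - t i) {1..r}"
    have ai: "t i \<le> a i \<and> a i < s" if "i \<in> {1..r}" for i
      using a that unfolding A_def by auto
    then have a': "a' \<in> gap_coeffs r s"
      unfolding a'_def gap_coeffs_def by (auto simp: restrict_PiE_iff less_imp_diff_less)
    have "z = gap_map p b0 b r (\<lambda>i. a' i + t i)"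
      using ai unfolding z a'_def by (intro gap_map_cong) auto
    then have "z = (gap_map p b0 b r a' + gap_map p 0 b r t) mod p"
      using gap_map_add[of p b0 0 b r a' t] by simp
    then show "z \<in> ?X \<inter> shift_mod p ?X (gap_map p 0 b r t)"
      using a A a' z unfolding shift_mod_def GAP_def by blast
  qed
  then have "card (gap_map p b0 b r ` A) \<le> card (?X \<inter> shift_mod p ?X (gap_map p 0 b r t))"
    by (intro card_mono) (auto simp: finite_GAP)
  moreover have "card (gap_map p b0 b r ` A) = (\<Prod>i=1..r. s - t i)"
    using proper A inj_on_subset unfolding proper_GAP_def A_def
    by (subst card_image) (auto simp: card_PiE)
  ultimately show ?thesis by simp
qed

lemma GAP_subset_Sym:
  assumes proper: "proper_GAP p b0 b r s" and "p > 0" "1 \<le> k" "k \<le> s"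
    and \<alpha>: "real r * (real k - 1) \<le> \<alpha> * real s"
  shows "GAP p 0 b r k \<subseteq> Sym p (1 - \<alpha>) (GAP p b0 b r s)"
proof
  let ?X = "GAP p b0 b r s"
  fix g assume "g \<in> GAP p 0 b r k"
  then obtain t where t: "t \<in> gap_coeffs r k" and g: "g = gap_map p 0 b r t"
    unfolding GAP_def by blast
  have ti: "t i < k" if "i \<in> {1..r}" for i
    using t that unfolding gap_coeffs_def by auto
  have ts: "t i \<le> s" if "i \<in> {1..r}" for i
    using ti[OF that] \<open>k \<le> s\<close> by simp
  have s: "real s > 0"
    using \<open>1 \<le> k\<close> \<open>k \<le> s\<close> by simp
  have "real (t i) \<le> real k - 1" if "i \<in> {1..r}" for i
    using ti[OF that] by (simp add: nat_less_real_le)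
  then have "(\<Sum>i=1..r. real (t i)) \<le> (\<Sum>i=1..r. real k - 1)"
    by (intro sum_mono)
  then have sum_t: "(\<Sum>i=1..r. real (t i)) / real s \<le> \<alpha>"
    using \<alpha> s by (simp add: divide_le_eq)
  have "(1 - \<alpha>) * real (card ?X) = real s ^ r * (1 - \<alpha>)"
    using card_GAP[OF proper] by simp
  also have "\<dots> \<le> real s ^ r * (1 - (\<Sum>i=1..r. real (t i)) / real s)"
    using sum_t by (intro mult_left_mono) auto
  also have "\<dots> \<le> (\<Prod>i=1..r. real s - real (t i))"
    using Weierstrass_prod_ineq_scaled[of "real s" "{1..r}" "\<lambda>i. real (t i)"] ts s by force
  also have "\<dots> = real (\<Prod>i=1..r. s - t i)"
    unfolding of_nat_prod using ts by (intro prod.cong) (simp_all add: of_nat_diff)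
  also have "\<dots> \<le> real (card (?X \<inter> shift_mod p ?X g))"
    using card_inter_shift_GAP_ge[OF proper, of t] t gap_coeffs_mono[OF \<open>k \<le> s\<close>] g
    unfolding of_nat_le_iff by blast
  finally show "g \<in> Sym p (1 - \<alpha>) ?X"
    using \<open>p > 0\<close> unfolding Sym_def g gap_map_def by simp
qed

lemma card_Sym_GAP_ge:
  assumes "proper_GAP p b0 b r s" "p > 0" "1 \<le> k" "k \<le> s"
    and "real r * (real k - 1) \<le> \<alpha> * real s"
  shows "k ^ r \<le> card (Sym p (1 - \<alpha>) (GAP p b0 b r s))"
proof -
  have "finite (Sym p (1 - \<alpha>) (GAP p b0 b r s))"
    unfolding Sym_def by (rule finite_subset[of _ "{0..<p}"]) auto
  then show ?thesis
    using card_mono[OF _ GAP_subset_Sym[OF assms]] card_GAP[OF proper_GAP_change_base[OF assms(1,4)]]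
    by simp
qed

lemma card_Sym_GAP_powr_ge:
  assumes "proper_GAP p b0 b r s" "p > 0" "real s \<ge> 2" "0 \<le> \<theta>" "\<theta> < 1"
  shows "real (card (GAP p b0 b r s)) powr \<theta>
           \<le> real (card (Sym p (1 - real r / real s powr (1 - \<theta>)) (GAP p b0 b r s)))"
proof -
  define k where "k = nat \<lfloor>real s powr \<theta>\<rfloor> + 1"
  have "real (k - 1) \<le> real s powr \<theta>"
    unfolding k_def by simp
  then have k: "real s powr \<theta> \<le> real k" "real k - 1 \<le> real s powr \<theta>" "1 \<le> k"
    unfolding k_def by linarith+
  have "real s powr \<theta> < real s powr 1"
    using assms by (intro powr_less_mono) auto
  then have "k \<le> s"
    using k \<open>real s \<ge> 2\<close> by simp
  have "real s powr (1 - \<theta>) * real s powr \<theta> = real s"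
    using \<open>real s \<ge> 2\<close> by (simp flip: powr_add)
  then have "real r / real s powr (1 - \<theta>) * real s
      = real r / real s powr (1 - \<theta>) * (real s powr (1 - \<theta>) * real s powr \<theta>)"
    by simp
  also have "\<dots> = real r * real s powr \<theta>"
    using \<open>real s \<ge> 2\<close> by simp
  finally have "real r * (real k - 1) \<le> real r / real s powr (1 - \<theta>) * real s"
    using k by (simp add: mult_left_mono)
  note Sym = card_Sym_GAP_ge[OF assms(1,2) \<open>1 \<le> k\<close> \<open>k \<le> s\<close> this]
  have "real (card (GAP p b0 b r s)) powr \<theta> = (real s powr \<theta>) ^ r"
    using card_GAP[OF assms(1)] \<open>real s \<ge> 2\<close>
    by (simp add: powr_realpow[symmetric] powr_powr powr_power mult.commute)
  also have "\<dots> \<le> real k ^ r"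
    using k by (simp add: power_mono)
  finally show ?thesis
    using Sym by (metis of_nat_le_iff of_nat_power order.trans)
qed

lemma additive_GAP:
  assumes "proper_GAP p b0 b r s" "p > 0" "real s \<ge> 2" "2 \<le> real s powr \<epsilon>"
  shows "additive p (real r / real s powr 0.9) 0.1 \<epsilon> (GAP p b0 b r s)"
  using card_sumset_GAP_powr_le[OF assms(1,4)] card_Sym_GAP_powr_ge[OF assms(1-3), of "0.1"]
  unfolding additive_def by simp

lemma two_le_powr:
  fixes a x :: real
  assumes "a > 0" "1 \<le> x * ln a"
  shows "2 \<le> a powr x"
proof -
  have "2 \<le> exp (x * ln a)"
    using exp_ge_add_one_self[of "x * ln a"] assms(2) by linarith
  then show ?thesis
    using assms(1) by (simp add: powr_def mult.commute)
qed

theorem lemma3p6: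
  fixes \<epsilon> :: real
  assumes "\<epsilon> > 0"
  shows "\<exists>c n0 :: nat. \<forall>p :: nat. prime p \<and> p \<ge> n0 \<longrightarrow>
    (\<forall>(\<delta>::real) (s::nat) (r::nat) (b0::int) (b::nat \<Rightarrow> int).
       \<delta> \<ge> real c / ln (real p) \<and> real p powr \<delta> = real s \<and> r > 0 \<and>
       b0 \<in> {0..<int p} \<and> (\<forall>i\<in>{1..r}. b i \<in> {0..<int p}) \<and>
       proper_GAP (int p) b0 b r s \<longrightarrow>
       additive (int p) (real r / real p powr (0.9 * \<delta>)) 0.1 \<epsilon> (GAP (int p) b0 b r s) \<and>
       entropy_rate (int p) (\<delta> * real r) (GAP (int p) b0 b r s))"
proof (rule exI[of _ "nat \<lceil>1 / \<epsilon>\<rceil> + 1"], rule exI[of _ 2], intro allI impI conjI)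
  fix p s r :: nat and \<delta> :: real and b0 :: int and b :: "nat \<Rightarrow> int"
  assume "prime p \<and> p \<ge> 2"
  then have p: "real p \<ge> 2" by simp
  assume h: "\<delta> \<ge> real (nat \<lceil>1 / \<epsilon>\<rceil> + 1) / ln (real p) \<and> real p powr \<delta> = real s \<and> r > 0 \<and>
    b0 \<in> {0..<int p} \<and> (\<forall>i\<in>{1..r}. b i \<in> {0..<int p}) \<and> proper_GAP (int p) b0 b r s"
  then have "\<delta> * ln (real p) \<ge> real (nat \<lceil>1 / \<epsilon>\<rceil> + 1)"
    using p by (simp add: divide_le_eq)
  then have \<delta>: "\<delta> * ln (real p) \<ge> 1" "\<delta> * ln (real p) \<ge> 1 / \<epsilon>"
    by linarith+
  have s: "real s = real p powr \<delta>" using h by simp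
  have s2: "real s \<ge> 2"
    unfolding s using two_le_powr \<delta>(1) p by simp
  moreover have "real s powr \<epsilon> \<ge> 2"
    unfolding s powr_powr using two_le_powr[of "real p" "\<delta> * \<epsilon>"] \<delta>(2) p \<open>\<epsilon> > 0\<close>
    by (simp add: field_simps)
  moreover have "real p powr (0.9 * \<delta>) = real s powr 0.9"
    unfolding s powr_powr by (simp add: mult.commute)
  ultimately show "additive (int p) (real r / real p powr (0.9 * \<delta>)) 0.1 \<epsilon> (GAP (int p) b0 b r s)"
    using additive_GAP[of "int p" b0 b r s] h p by simp
  show "entropy_rate (int p) (\<delta> * real r) (GAP (int p) b0 b r s)"
    using card_GAP[of "int p" b0 b r s] h s2
    by (simp add: entropy_rate_def powr_powr[symmetric] powr_realpow)
qed

end
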